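(* Consider the planar random motion $(X(t),Y(t))$ defined in the context, driven by a homogeneous Poisson process $N(t)$ of rate $\lambda>0$ with speed $c>0$. For $t>0$, conditionally on the event $\{N(t)\text{ is even}\}$, the law of $(X(t),Y(t))$ restricted to the open disk $\{x^2+y^2<c^2t^2\}$ has density $$\frac{\lambda}{2\pi c}\,\frac{1}{\cosh(\lambda t)}\,\frac{\sinh\left(\frac{\lambda}{c}\sqrt{c^2t^2-(x^2+y^2)}\right)}{\sqrt{c^2t^2-(x^2+y^2)}},$$ whose integral over the disk equals $1-\frac{1}{\cosh(\lambda t)}$; the remaining mass $\frac{1}{\cosh(\lambda t)}$ lies on the circle $x^2+y^2=c^2t^2$.
   Context: The planar random motion: a particle starts at the origin and moves at constant speed $c$ in a direction uniformly distributed on $[0,2\pi)$; at each event of $N(t)$ it takes a new direction, uniform on $[0,2\pi)$ and independent of everything else. It is known (Kolesnik–Orsingher) that for every $n\ge1$, conditionally on $N(t)=n$, $(X(t),Y(t))$ has density $\frac{n}{2\pi(ct)^n}\,[c^2t^2-(x^2+y^2)]^{\frac n2-1}$ on the open disk $x^2+y^2<c^2t^2$, while conditionally on $N(t)=0$ it lies on the circle $x^2+y^2=c^2t^2$. *)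

theory Defs
  imports "HOL-Probability.Probability"
begin

definition open_disk :: "real \<Rightarrow> real \<Rightarrow> (real \<times> real) set" where
  "open_disk c t = {p. (fst p)\<^sup>2 + (snd p)\<^sup>2 < (c * t)\<^sup>2}"

definition circle :: "real \<Rightarrow> real \<Rightarrow> (real \<times> real) set" where
  "circle c t = {p. (fst p)\<^sup>2 + (snd p)\<^sup>2 = (c * t)\<^sup>2}"

text \<open>Kolesnik--Orsingher conditional density given N(t) = n (n \<ge> 1), on the open disk.\<close>
definition ko_density :: "nat \<Rightarrow> real \<Rightarrow> real \<Rightarrow> real \<times> real \<Rightarrow> real" where
  "ko_density n c t p =
     real n / (2 * pi * (c * t) ^ n) *
     ((c * t)\<^sup>2 - ((fst p)\<^sup>2 + (snd p)\<^sup>2)) powr (real n / 2 - 1)"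

definition even_density :: "real \<Rightarrow> real \<Rightarrow> real \<Rightarrow> real \<times> real \<Rightarrow> real" where
  "even_density l c t p =
     l / (2 * pi * c) * (1 / cosh (l * t)) *
     (sinh (l / c * sqrt ((c * t)\<^sup>2 - ((fst p)\<^sup>2 + (snd p)\<^sup>2))) /
      sqrt ((c * t)\<^sup>2 - ((fst p)\<^sup>2 + (snd p)\<^sup>2)))"

end

theory Submission
  imports Defs
begin

text \<open>Given N(t) = n \<ge> 1 the position has the Kolesnik--Orsingher density, and given
N(t) = 0 it lies on the circle. Conditionally on N(t) being even, the density on the disk is
therefore the mixture of the densities for even n \<ge> 2 with weights
(\<lambda>t)^n / (n! cosh \<lambda>t); by the odd-power series of sinh this mixture is the stated density,
and monotone convergence exchanges sum and integral. The remaining even value n = 0 has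
probability exp(-\<lambda>t) out of P(N(t) even) = exp(-\<lambda>t) cosh \<lambda>t, all of it on the circle.\<close>

definition even_poisson_pmf :: "real \<Rightarrow> nat \<Rightarrow> real" where
  "even_poisson_pmf a n = (if even n then a ^ n / fact n / cosh a else 0)"

lemma even_poisson_pmf_nonneg: "even_poisson_pmf a n \<ge> 0"
  by (simp add: even_poisson_pmf_def cosh_real_pos zero_le_even_power)

lemma sums_even_poisson_pmf: "even_poisson_pmf a sums 1"
proof -
  have "(\<lambda>n. (if even n then a ^ n /\<^sub>R fact n else 0) / cosh a) sums (cosh a / cosh a)"
    by (intro sums_divide cosh_converges)
  moreover have "(\<lambda>n. (if even n then a ^ n /\<^sub>R fact n else 0) / cosh a) = even_poisson_pmf a"
    by (auto simp: fun_eq_iff even_poisson_pmf_def divide_inverse mult.commute)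
  moreover have "cosh a / cosh a = 1"
    using cosh_real_pos[of a] by simp
  ultimately show ?thesis by simp
qed

lemma poisson_weight_eq_even_poisson_pmf:
  "even n \<Longrightarrow> exp (- a) * a ^ n / fact n = exp (- a) * cosh a * even_poisson_pmf a n"
  by (simp add: even_poisson_pmf_def cosh_real_pos[THEN less_imp_neq, symmetric])

lemma ko_density_nonneg: "c > 0 \<Longrightarrow> t > 0 \<Longrightarrow> ko_density n c t p \<ge> 0"
  by (simp add: ko_density_def)

lemma ko_density_0: "ko_density 0 c t p = 0"
  by (simp add: ko_density_def)

lemma ko_density_Suc:
  assumes "p \<in> open_disk c t"
  defines "r \<equiv> sqrt ((c * t)\<^sup>2 - ((fst p)\<^sup>2 + (snd p)\<^sup>2))"
  shows "ko_density (Suc k) c t p = real (Suc k) / (2 * pi * (c * t) ^ Suc k) * (r ^ k / r)"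
proof -
  have r: "r > 0" using assms by (simp add: open_disk_def)
  have "(c * t)\<^sup>2 - ((fst p)\<^sup>2 + (snd p)\<^sup>2) = r powr 2"
    using r by (simp add: r_def powr_half_sqrt[symmetric] powr_powr)
  then have "((c * t)\<^sup>2 - ((fst p)\<^sup>2 + (snd p)\<^sup>2)) powr (real (Suc k) / 2 - 1)
      = r powr (2 * (real (Suc k) / 2 - 1))"
    by (simp only: powr_powr)
  also have "\<dots> = r powr (real k - 1)"
    by (rule arg_cong[where f = "\<lambda>a. r powr a"]) (simp add: field_simps)
  also have "\<dots> = r ^ k / r"
    using r by (simp add: powr_diff powr_realpow)
  finally show ?thesis by (simp add: ko_density_def)
qed

lemma sums_even_ko_density:
  assumes c: "c > 0" and t: "t > 0" and p: "p \<in> open_disk c t"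
  shows "(\<lambda>n. even_poisson_pmf (l * t) n * ko_density n c t p) sums even_density l c t p"
proof -
  define r where "r = sqrt ((c * t)\<^sup>2 - ((fst p)\<^sup>2 + (snd p)\<^sup>2))"
  have r: "r > 0" using p by (simp add: r_def open_disk_def)
  define K where "K = l / (2 * pi * c * cosh (l * t) * r)"
  define x where "x = l / c * r"
  have term_Suc: "(l * t) ^ Suc k / fact (Suc k) / cosh (l * t) * ko_density (Suc k) c t p
      = K * (x ^ k /\<^sub>R fact k)" for k
  proof -
    have "(l * t) ^ Suc k / (c * t) ^ Suc k = (l / c) ^ Suc k"
      using c t by (simp add: power_divide[symmetric] del: power_Suc)
    moreover have "x ^ k = (l / c) ^ k * r ^ k" unfolding x_def by (rule power_mult_distrib)
    moreover have "(fact (Suc k) :: real) = real (Suc k) * fact k" by simp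
    moreover have "cosh (l * t) > 0" by (simp add: cosh_real_pos)
    ultimately show ?thesis using c t r
      unfolding ko_density_Suc[OF p] K_def r_def[symmetric]
      by (simp add: divide_simps del: power_Suc of_nat_Suc) (simp add: algebra_simps)
  qed
  define f where "f = (\<lambda>n. even_poisson_pmf (l * t) n * ko_density n c t p)"
  have "(\<lambda>k. K * (if even k then 0 else x ^ k /\<^sub>R fact k)) sums (K * sinh x)"
    by (intro sums_mult sinh_converges)
  moreover have "K * (if even k then 0 else x ^ k /\<^sub>R fact k) = f (Suc k)" for k
    using term_Suc[of k] by (simp add: f_def even_poisson_pmf_def)
  ultimately have "(\<lambda>k. f (Suc k)) sums (K * sinh x)" by simp
  moreover have "f 0 = 0" by (simp add: f_def ko_density_0)
  moreover have "K * sinh x = even_density l c t p"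
    by (simp add: even_density_def K_def x_def r_def)
  ultimately have "f sums even_density l c t p"
    by (simp add: sums_Suc_iff)
  then show ?thesis unfolding f_def .
qed

lemma even_density_nonneg:
  assumes "c > 0" "t > 0" "p \<in> open_disk c t"
  shows "even_density l c t p \<ge> 0"
  using assms by (intro sums_le[OF _ sums_zero sums_even_ko_density])
    (auto intro: mult_nonneg_nonneg even_poisson_pmf_nonneg ko_density_nonneg)

lemma borel_measurable_disk_gap:
  "(\<lambda>p::real \<times> real. (c * t)\<^sup>2 - ((fst p)\<^sup>2 + (snd p)\<^sup>2)) \<in> borel_measurable borel"
  by (intro borel_measurable_continuous_onI continuous_intros)

lemma borel_measurable_ko_density[measurable]: "ko_density n c t \<in> borel_measurable borel"
proof -
  have "(\<lambda>x::real. real n / (2 * pi * (c * t) ^ n) * x powr (real n / 2 - 1))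
      \<in> borel_measurable borel"
    by measurable
  from measurable_compose[OF borel_measurable_disk_gap this] show ?thesis
    by (simp add: ko_density_def[abs_def])
qed

lemma borel_measurable_even_density[measurable]: "even_density l c t \<in> borel_measurable borel"
proof -
  have "(\<lambda>x::real. sinh (l / c * sqrt x)) \<in> borel_measurable borel"
    by (intro borel_measurable_continuous_onI continuous_intros)
  then have "(\<lambda>x::real. l / (2 * pi * c) * (1 / cosh (l * t)) * (sinh (l / c * sqrt x) / sqrt x))
      \<in> borel_measurable borel"
    by measurable
  from measurable_compose[OF borel_measurable_disk_gap this] show ?thesis
    by (simp add: even_density_def[abs_def])
qed

lemma open_disk_sets[measurable]: "open_disk c t \<in> sets borel"
  unfolding open_disk_def by (intro borel_open open_Collect_less continuous_intros)

lemma circle_sets[measurable]: "circle c t \<in> sets borel"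
  unfolding circle_def by (intro borel_closed closed_Collect_eq continuous_intros)

lemma open_disk_Int_circle: "open_disk c t \<inter> circle c t = {}"
  by (auto simp: open_disk_def circle_def)

lemma nn_integral_even_density_eq_suminf:
  assumes "c > 0" "t > 0" and S: "S \<in> sets borel" "S \<subseteq> open_disk c t"
  shows "(\<integral>\<^sup>+ p \<in> S. ennreal (even_density l c t p) \<partial>lborel)
    = (\<Sum>n. ennreal (even_poisson_pmf (l * t) n) *
         (\<integral>\<^sup>+ p \<in> S. ennreal (ko_density n c t p) \<partial>lborel))"
proof -
  have "ennreal (even_density l c t p) * indicator S p
      = (\<Sum>n. ennreal (even_poisson_pmf (l * t) n * ko_density n c t p) * indicator S p)" for p
  proof (cases "p \<in> S")
    case True
    with S have "(\<Sum>n. ennreal (even_poisson_pmf (l * t) n * ko_density n c t p))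
        = ennreal (even_density l c t p)"
      using assms by (intro suminf_ennreal_eq sums_even_ko_density)
        (auto intro: mult_nonneg_nonneg even_poisson_pmf_nonneg ko_density_nonneg)
    with True show ?thesis by simp
  qed simp
  then have "(\<integral>\<^sup>+ p \<in> S. ennreal (even_density l c t p) \<partial>lborel)
      = (\<integral>\<^sup>+ p. (\<Sum>n. ennreal (even_poisson_pmf (l * t) n * ko_density n c t p) * indicator S p)
          \<partial>lborel)"
    by (simp only:)
  also have "\<dots> = (\<Sum>n. \<integral>\<^sup>+ p. ennreal (even_poisson_pmf (l * t) n * ko_density n c t p) *
      indicator S p \<partial>lborel)"
    by (rule nn_integral_suminf) (use S in measurable)
  also have "\<dots> = (\<Sum>n. ennreal (even_poisson_pmf (l * t) n) *
      (\<integral>\<^sup>+ p \<in> S. ennreal (ko_density n c t p) \<partial>lborel))"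
    using assms S by (simp add: ennreal_mult even_poisson_pmf_nonneg ko_density_nonneg
        nn_integral_cmult mult.assoc)
  finally show ?thesis .
qed

lemma emeasure_eq_suminf_level_sets:
  assumes N: "N \<in> measurable M (count_space UNIV)" and Q: "{\<omega> \<in> space M. Q \<omega>} \<in> sets M"
  shows "emeasure M {\<omega> \<in> space M. Q \<omega>} = (\<Sum>n. emeasure M {\<omega> \<in> space M. N \<omega> = n \<and> Q \<omega>})"
proof -
  have "{\<omega> \<in> space M. N \<omega> = n \<and> Q \<omega>} = {\<omega> \<in> space M. N \<omega> = n} \<inter> {\<omega> \<in> space M. Q \<omega>}" for n
    by auto
  then have "range (\<lambda>n. {\<omega> \<in> space M. N \<omega> = n \<and> Q \<omega>}) \<subseteq> sets M"
    using N Q by auto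
  then have "(\<Sum>n. emeasure M {\<omega> \<in> space M. N \<omega> = n \<and> Q \<omega>})
      = emeasure M (\<Union>n. {\<omega> \<in> space M. N \<omega> = n \<and> Q \<omega>})"
    by (intro suminf_emeasure) (auto simp: disjoint_family_on_def)
  also have "(\<Union>n. {\<omega> \<in> space M. N \<omega> = n \<and> Q \<omega>}) = {\<omega> \<in> space M. Q \<omega>}"
    by auto
  finally show ?thesis ..
qed

lemma set_integral_eq_of_set_nn_integral:
  fixes f :: "'a \<Rightarrow> real"
  assumes "f \<in> borel_measurable M" "S \<in> sets M" "\<And>x. x \<in> S \<Longrightarrow> 0 \<le> f x" "0 \<le> r"
    and "(\<integral>\<^sup>+ x \<in> S. ennreal (f x) \<partial>M) = ennreal r"
  shows "set_integrable M S f \<and> (LINT x : S | M. f x) = r"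
proof -
  have "(\<integral>\<^sup>+ x. ennreal (indicator S x *\<^sub>R f x) \<partial>M) = (\<integral>\<^sup>+ x \<in> S. ennreal (f x) \<partial>M)"
    by (intro nn_integral_cong) (simp add: indicator_def)
  then have "(\<integral>\<^sup>+ x. ennreal (indicator S x *\<^sub>R f x) \<partial>M) = ennreal r"
    using assms(5) by simp
  then have "integrable M (\<lambda>x. indicator S x *\<^sub>R f x) \<and> (\<integral>x. indicator S x *\<^sub>R f x \<partial>M) = r"
    using assms by (subst nn_integral_eq_integrable[symmetric]) (auto simp: indicator_def)
  then show ?thesis
    by (simp add: set_integrable_def set_lebesgue_integral_def)
qed

locale poisson_planar_motion = prob_space M
  for M :: "'w measure" and N :: "'w \<Rightarrow> nat" and P :: "'w \<Rightarrow> real \<times> real" and l c t :: real +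
  assumes l_pos: "l > 0" and c_pos: "c > 0" and t_pos: "t > 0"
    and N_measurable[measurable]: "N \<in> measurable M (count_space UNIV)"
    and P_measurable[measurable]: "P \<in> borel_measurable M"
    and poisson: "\<And>n. measure M {\<omega> \<in> space M. N \<omega> = n} = exp (- l * t) * (l * t) ^ n / fact n"
    and cond_dens: "\<And>n A. n \<ge> 1 \<Longrightarrow> A \<in> sets borel \<Longrightarrow>
        emeasure M {\<omega> \<in> space M. N \<omega> = n \<and> P \<omega> \<in> A} =
        emeasure M {\<omega> \<in> space M. N \<omega> = n} *
        (\<integral>\<^sup>+ p \<in> A \<inter> open_disk c t. ennreal (ko_density n c t p) \<partial>lborel)"
    and cond_zero: "emeasure M {\<omega> \<in> space M. N \<omega> = 0 \<and> P \<omega> \<notin> circle c t} = 0"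
begin

lemma emeasure_N_eq:
  "emeasure M {\<omega> \<in> space M. N \<omega> = n} = ennreal (exp (- l * t) * (l * t) ^ n / fact n)"
  using poisson[of n] by (simp add: emeasure_eq_measure)

lemma nn_integral_ko_density_disk:
  assumes "n \<noteq> 0"
  shows "(\<integral>\<^sup>+ p \<in> open_disk c t. ennreal (ko_density n c t p) \<partial>lborel) = 1"
proof -
  have pos: "exp (- l * t) * (l * t) ^ n / fact n > 0"
    using l_pos t_pos by simp
  have "ennreal (exp (- l * t) * (l * t) ^ n / fact n) * 1
      = ennreal (exp (- l * t) * (l * t) ^ n / fact n) *
        (\<integral>\<^sup>+ p \<in> open_disk c t. ennreal (ko_density n c t p) \<partial>lborel)"
    using cond_dens[of n UNIV] assms by (simp add: emeasure_N_eq)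
  then show ?thesis
    using pos l_pos t_pos by (subst (asm) ennreal_mult_cancel_left) auto
qed

lemma emeasure_even_in_disk:
  assumes S: "S \<in> sets borel" "S \<subseteq> open_disk c t"
  shows "emeasure M {\<omega> \<in> space M. P \<omega> \<in> S \<and> even (N \<omega>)}
    = ennreal (exp (- l * t) * cosh (l * t)) * (\<integral>\<^sup>+ p \<in> S. ennreal (even_density l c t p) \<partial>lborel)"
proof -
  have "emeasure M {\<omega> \<in> space M. N \<omega> = n \<and> P \<omega> \<in> S \<and> even (N \<omega>)}
      = ennreal (exp (- l * t) * cosh (l * t)) *
        (ennreal (even_poisson_pmf (l * t) n) *
         (\<integral>\<^sup>+ p \<in> S. ennreal (ko_density n c t p) \<partial>lborel))" for n
  proof (cases "even n \<and> n \<noteq> 0")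
    case True
    have "emeasure M {\<omega> \<in> space M. N \<omega> = n \<and> P \<omega> \<in> S \<and> even (N \<omega>)}
        = emeasure M {\<omega> \<in> space M. N \<omega> = n \<and> P \<omega> \<in> S}"
      using True by (intro arg_cong[where f = "emeasure M"]) auto
    also have "\<dots> = ennreal (exp (- l * t) * (l * t) ^ n / fact n) *
        (\<integral>\<^sup>+ p \<in> S. ennreal (ko_density n c t p) \<partial>lborel)"
      using cond_dens[of n S] True S by (simp add: emeasure_N_eq Int_absorb2)
    also have "exp (- l * t) * (l * t) ^ n / fact n
        = exp (- l * t) * cosh (l * t) * even_poisson_pmf (l * t) n"
      using True poisson_weight_eq_even_poisson_pmf[of n "l * t"] by simp
    finally show ?thesis
      by (simp add: ennreal_mult cosh_real_pos even_poisson_pmf_nonneg mult.assoc)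
  next
    case False
    then consider "odd n" | "n = 0" by blast
    then show ?thesis
    proof cases
      case 1
      then have "{\<omega> \<in> space M. N \<omega> = n \<and> P \<omega> \<in> S \<and> even (N \<omega>)} = {}"
        by auto
      with 1 show ?thesis by (simp only: emeasure_empty) (simp add: even_poisson_pmf_def)
    next
      case 2
      have "emeasure M {\<omega> \<in> space M. N \<omega> = n \<and> P \<omega> \<in> S \<and> even (N \<omega>)}
          \<le> emeasure M {\<omega> \<in> space M. N \<omega> = 0 \<and> P \<omega> \<notin> circle c t}"
        using 2 S open_disk_Int_circle by (intro emeasure_mono) auto
      then show ?thesis
        using 2 cond_zero by (simp add: ko_density_0)
    qed
  qed
  then have "emeasure M {\<omega> \<in> space M. P \<omega> \<in> S \<and> even (N \<omega>)}
      = ennreal (exp (- l * t) * cosh (l * t)) *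
        (\<Sum>n. ennreal (even_poisson_pmf (l * t) n) *
          (\<integral>\<^sup>+ p \<in> S. ennreal (ko_density n c t p) \<partial>lborel))"
    using S by (subst emeasure_eq_suminf_level_sets[OF N_measurable]) auto
  then show ?thesis
    using S c_pos t_pos by (simp add: nn_integral_even_density_eq_suminf)
qed

lemma emeasure_even_on_circle:
  "emeasure M {\<omega> \<in> space M. P \<omega> \<in> circle c t \<and> even (N \<omega>)} = ennreal (exp (- l * t))"
proof -
  have "emeasure M {\<omega> \<in> space M. N \<omega> = n \<and> P \<omega> \<in> circle c t \<and> even (N \<omega>)}
      = ennreal (if n = 0 then exp (- l * t) else 0)" for n
  proof (cases "n = 0")
    case True
    have "{\<omega> \<in> space M. N \<omega> = 0 \<and> P \<omega> \<notin> circle c t} \<in> null_sets M"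
      using cond_zero by (intro null_setsI) measurable
    then have "emeasure M ({\<omega> \<in> space M. N \<omega> = 0 \<and> P \<omega> \<in> circle c t}
          \<union> {\<omega> \<in> space M. N \<omega> = 0 \<and> P \<omega> \<notin> circle c t})
        = emeasure M {\<omega> \<in> space M. N \<omega> = 0 \<and> P \<omega> \<in> circle c t}"
      by (intro emeasure_Un_null_set) measurable
    moreover have "{\<omega> \<in> space M. N \<omega> = 0 \<and> P \<omega> \<in> circle c t}
        \<union> {\<omega> \<in> space M. N \<omega> = 0 \<and> P \<omega> \<notin> circle c t} = {\<omega> \<in> space M. N \<omega> = 0}"
      by auto
    moreover have "{\<omega> \<in> space M. N \<omega> = 0 \<and> P \<omega> \<in> circle c t \<and> even (N \<omega>)}
        = {\<omega> \<in> space M. N \<omega> = 0 \<and> P \<omega> \<in> circle c t}"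
      by auto
    ultimately show ?thesis
      using True emeasure_N_eq[of 0] by simp
  next
    case False
    have "emeasure M {\<omega> \<in> space M. N \<omega> = n \<and> P \<omega> \<in> circle c t \<and> even (N \<omega>)}
        \<le> emeasure M {\<omega> \<in> space M. N \<omega> = n \<and> P \<omega> \<in> circle c t}"
      by (intro emeasure_mono) auto
    also have "\<dots> = 0"
      using cond_dens[of n "circle c t"] False open_disk_Int_circle by (simp add: Int_commute)
    finally show ?thesis using False by simp
  qed
  then have "emeasure M {\<omega> \<in> space M. P \<omega> \<in> circle c t \<and> even (N \<omega>)}
      = (\<Sum>n. ennreal (if n = 0 then exp (- l * t) else 0))"
    by (subst emeasure_eq_suminf_level_sets[OF N_measurable]) auto
  also have "\<dots> = ennreal (exp (- l * t))"
    using sums_single[of 0 "\<lambda>_. exp (- l * t)"] by (intro suminf_ennreal_eq) auto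
  finally show ?thesis .
qed

lemma prob_even_N: "prob {\<omega> \<in> space M. even (N \<omega>)} = exp (- l * t) * cosh (l * t)"
proof -
  have "emeasure M {\<omega> \<in> space M. N \<omega> = n \<and> even (N \<omega>)}
      = ennreal (exp (- l * t) * cosh (l * t) * even_poisson_pmf (l * t) n)" for n
  proof (cases "even n")
    case True
    then have "{\<omega> \<in> space M. N \<omega> = n \<and> even (N \<omega>)} = {\<omega> \<in> space M. N \<omega> = n}"
      by auto
    with True show ?thesis
      using poisson_weight_eq_even_poisson_pmf[of n "l * t"] by (simp add: emeasure_N_eq)
  next
    case False
    then have "{\<omega> \<in> space M. N \<omega> = n \<and> even (N \<omega>)} = {}"
      by auto
    with False show ?thesis by (simp only: emeasure_empty) (simp add: even_poisson_pmf_def)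
  qed
  moreover have "(\<lambda>n. exp (- l * t) * cosh (l * t) * even_poisson_pmf (l * t) n)
      sums (exp (- l * t) * cosh (l * t))"
    using sums_mult[OF sums_even_poisson_pmf] by fastforce
  ultimately have "emeasure M {\<omega> \<in> space M. even (N \<omega>)} = ennreal (exp (- l * t) * cosh (l * t))"
    by (subst emeasure_eq_suminf_level_sets[OF N_measurable])
      (auto intro!: suminf_ennreal_eq mult_nonneg_nonneg even_poisson_pmf_nonneg cosh_real_nonneg)
  then show ?thesis
    by (simp add: emeasure_eq_measure cosh_real_nonneg)
qed

lemma even_density_disk:
  "set_integrable lborel (open_disk c t) (even_density l c t)
   \<and> (LINT p : open_disk c t | lborel. even_density l c t p) = 1 - 1 / cosh (l * t)"
proof (rule set_integral_eq_of_set_nn_integral)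
  have "even_poisson_pmf (l * t) n * (\<integral>\<^sup>+ p \<in> open_disk c t. ennreal (ko_density n c t p) \<partial>lborel)
      = ennreal (if n = 0 then 0 else even_poisson_pmf (l * t) n)" for n
    by (simp add: ko_density_0 nn_integral_ko_density_disk)
  moreover have "(\<lambda>n. if n = 0 then 0 else even_poisson_pmf (l * t) n) sums (1 - 1 / cosh (l * t))"
  proof -
    have "(\<lambda>n. even_poisson_pmf (l * t) n - (if n = 0 then even_poisson_pmf (l * t) n else 0))
        sums (1 - even_poisson_pmf (l * t) 0)"
      by (intro sums_diff sums_even_poisson_pmf sums_single)
    then show ?thesis
      by (simp add: even_poisson_pmf_def[of _ 0] if_distrib cong: if_cong)
  qed
  ultimately show "(\<integral>\<^sup>+ p \<in> open_disk c t. ennreal (even_density l c t p) \<partial>lborel)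
      = ennreal (1 - 1 / cosh (l * t))"
    using c_pos t_pos by (simp add: nn_integral_even_density_eq_suminf suminf_ennreal_eq
        even_poisson_pmf_nonneg sums_iff)
  show "0 \<le> 1 - 1 / cosh (l * t)"
    using cosh_real_ge_1[of "l * t"] by simp
qed (use c_pos t_pos even_density_nonneg in auto)

lemma even_density_cond_prob:
  assumes S: "S \<in> sets borel" "S \<subseteq> open_disk c t"
  shows "set_integrable lborel S (even_density l c t)
    \<and> (LINT p : S | lborel. even_density l c t p) = cond_prob M (\<lambda>\<omega>. P \<omega> \<in> S) (\<lambda>\<omega>. even (N \<omega>))"
proof (rule set_integral_eq_of_set_nn_integral)
  define E where "E = exp (- l * t) * cosh (l * t)"
  have E: "E > 0" by (simp add: E_def cosh_real_pos)
  have "ennreal (prob {\<omega> \<in> space M. P \<omega> \<in> S \<and> even (N \<omega>)})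
      = ennreal E * (\<integral>\<^sup>+ p \<in> S. ennreal (even_density l c t p) \<partial>lborel)"
    using emeasure_even_in_disk[OF S] by (simp add: E_def emeasure_eq_measure)
  then have "ennreal (1 / E) * ennreal (prob {\<omega> \<in> space M. P \<omega> \<in> S \<and> even (N \<omega>)})
      = (\<integral>\<^sup>+ p \<in> S. ennreal (even_density l c t p) \<partial>lborel)"
    using E by (simp add: ennreal_mult[symmetric] mult.assoc[symmetric])
  then show "(\<integral>\<^sup>+ p \<in> S. ennreal (even_density l c t p) \<partial>lborel)
      = ennreal (cond_prob M (\<lambda>\<omega>. P \<omega> \<in> S) (\<lambda>\<omega>. even (N \<omega>)))"
    using E prob_even_N[folded E_def] by (simp add: cond_prob_def ennreal_mult[symmetric])
qed (use S c_pos t_pos even_density_nonneg in \<open>auto simp: cond_prob_def\<close>)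

lemma cond_prob_even_circle:
  "cond_prob M (\<lambda>\<omega>. P \<omega> \<in> circle c t) (\<lambda>\<omega>. even (N \<omega>)) = 1 / cosh (l * t)"
  using emeasure_even_on_circle
  by (simp add: cond_prob_def prob_even_N emeasure_eq_measure)

end

theorem theorem5p4:
  fixes M :: "'w measure" and N :: "'w \<Rightarrow> nat" and P :: "'w \<Rightarrow> real \<times> real"
    and l c t :: real
  assumes "prob_space M"
    and l_pos: "l > 0" and c_pos: "c > 0" and t_pos: "t > 0"
    and N_meas: "N \<in> measurable M (count_space UNIV)"
    and P_meas: "P \<in> borel_measurable M"
    and poisson: "\<And>n. measure M {\<omega> \<in> space M. N \<omega> = n} = exp (- l * t) * (l * t) ^ n / fact n"
    and cond_dens: "\<And>n A. n \<ge> 1 \<Longrightarrow> A \<in> sets borel \<Longrightarrow>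
        emeasure M {\<omega> \<in> space M. N \<omega> = n \<and> P \<omega> \<in> A} =
        emeasure M {\<omega> \<in> space M. N \<omega> = n} *
        (\<integral>\<^sup>+ p \<in> A \<inter> open_disk c t. ennreal (ko_density n c t p) \<partial>lborel)"
    and cond_zero: "emeasure M {\<omega> \<in> space M. N \<omega> = 0 \<and> P \<omega> \<notin> circle c t} = 0"
  shows "set_integrable lborel (open_disk c t) (even_density l c t)
       \<and> (\<forall>A \<in> sets borel.
            cond_prob M (\<lambda>\<omega>. P \<omega> \<in> A \<inter> open_disk c t) (\<lambda>\<omega>. even (N \<omega>))
            = (LINT p : A \<inter> open_disk c t | lborel. even_density l c t p))
       \<and> (LINT p : open_disk c t | lborel. even_density l c t p) = 1 - 1 / cosh (l * t)
       \<and> cond_prob M (\<lambda>\<omega>. P \<omega> \<in> circle c t) (\<lambda>\<omega>. even (N \<omega>)) = 1 / cosh (l * t)"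
proof -
  interpret poisson_planar_motion M N P l c t
    using assms by (simp add: poisson_planar_motion_def poisson_planar_motion_axioms_def)
  show ?thesis
    using even_density_disk even_density_cond_prob cond_prob_even_circle by auto
qed

end
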